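(* Let $p$ be an odd prime and let $G=C_p\rtimes C_{p-1}\cong(\mathbb{F}_p,+)\rtimes(\mathbb{F}_p^\times,\times)$ act on $\mathbb{F}_p[t]/(t-1)^p=\mathbb{F}_p[t]/(t^p-1)$ by $(c,m)\cdot t^x=t^{c+mx}$. Then the $\mathbb{F}_p[G]$-submodule generated by $$\bar y=\sum_{i\in\mathbb{F}_p^\times}i^{-1}t^i$$ equals $(t-1)\mathbb{F}_p[t]/(t-1)^p$, the kernel of the augmentation $\mathbb{F}_p[t]/(t-1)^p\to\mathbb{F}_p$, $t\mapsto1$. *)

theory Defs
  imports "HOL-Number_Theory.Number_Theory"
begin

text \<open>The ring F_p[t]/(t^p - 1) is modelled by coefficient vectors f :: nat => int,
  where f x (for x < p) is the coefficient of t^x, reduced to {0..<p}, and f x = 0 for x >= p.\<close>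

definition Quot :: "nat \<Rightarrow> (nat \<Rightarrow> int) set" where
  "Quot p = {f. \<forall>k. (k < p \<longrightarrow> 0 \<le> f k \<and> f k < int p) \<and> (\<not> k < p \<longrightarrow> f k = 0)}"

definition fpnorm :: "nat \<Rightarrow> (nat \<Rightarrow> int) \<Rightarrow> (nat \<Rightarrow> int)" where
  "fpnorm p f = (\<lambda>k. if k < p then f k mod int p else 0)"

definition act :: "nat \<Rightarrow> nat \<Rightarrow> nat \<Rightarrow> (nat \<Rightarrow> int) \<Rightarrow> (nat \<Rightarrow> int)" where
  "act p c m f = fpnorm p (\<lambda>k. \<Sum>x<p. if [int c + int m * int x = int k] (mod int p) then f x else 0)"

definition modinv :: "nat \<Rightarrow> nat \<Rightarrow> int" where
  "modinv p i = (THE j. 0 \<le> j \<and> j < int p \<and> [int i * j = 1] (mod int p))"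

definition ybar :: "nat \<Rightarrow> (nat \<Rightarrow> int)" where
  "ybar p = fpnorm p (\<lambda>i. if 1 \<le> i then modinv p i else 0)"

text \<open>F_p[G]-submodule generated by v: all (sum_g a_g g) . v with a_g in F_p, G = {(c,m). c < p, 1 <= m < p}.\<close>
definition gen_submodule :: "nat \<Rightarrow> (nat \<Rightarrow> int) \<Rightarrow> (nat \<Rightarrow> int) set" where
  "gen_submodule p v =
     {fpnorm p (\<lambda>k. \<Sum>c<p. \<Sum>m\<in>{1..<p}. a c m * act p c m v k) | a :: nat \<Rightarrow> nat \<Rightarrow> int. True}"

text \<open>The ideal (t-1) F_p[t]/(t^p-1): coefficient k of (t-1)h is h(k-1 mod p) - h(k).\<close>
definition t_minus_1_ideal :: "nat \<Rightarrow> (nat \<Rightarrow> int) set" where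
  "t_minus_1_ideal p = {fpnorm p (\<lambda>k. h ((k + p - 1) mod p) - h k) | h. h \<in> Quot p}"

definition aug_kernel :: "nat \<Rightarrow> (nat \<Rightarrow> int) set" where
  "aug_kernel p = {f \<in> Quot p. (\<Sum>k<p. f k) mod int p = 0}"

end

theory Submission
  imports Defs
begin

text \<open>
  The group permutes coefficients, so everything generated by ybar has coefficient sum 0 mod p,
  because the coefficient sum of ybar is the power sum of x ^ (p - 2) over F_p, whose exponent is
  not divisible by p - 1. The elements with coefficient sum 0 are exactly the products (t - 1) h:
  take for h the negated partial sums.

  Conversely, translates t ^ c ybar already suffice. The coefficient of t ^ x in ybar is
  x ^ (p - 2), and convolution with this function differentiates polynomial functions of degree
  below p: expanding and using the power sums, sum_u (d - u) ^ n u ^ (p - 2) = n d ^ (n - 1).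
  Hence the series L(d) = sum_(0 < j < p) d ^ j / j convolves to the geometric sum
  sum_(m < p - 1) d ^ m, which as a function on F_p is the indicator of 0 minus that of 1.
  So the translates of ybar weighted by L give 1 - t, and weighting further by the partial sums
  of f gives f.
\<close>

section \<open>Power sums and convolutions modulo a prime\<close>

lemma sum_affine_mod_reindex:
  fixes G :: "int \<Rightarrow> 'a::comm_monoid_add" and a b :: int
  assumes "coprime b (int p)"
  shows "(\<Sum>u<p. G ((a + b * int u) mod int p)) = (\<Sum>u<p. G (int u))"
proof (cases "p = 0")
  case False
  define \<phi> where "\<phi> u = nat ((a + b * int u) mod int p)" for u
  have inj: "inj_on \<phi> {..<p}"
  proof
    fix x y assume x: "x \<in> {..<p}" and y: "y \<in> {..<p}" and "\<phi> x = \<phi> y"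
    then have "[a + b * int x = a + b * int y] (mod int p)"
      using False by (simp add: \<phi>_def cong_def eq_nat_nat_iff)
    then have "[int x = int y] (mod int p)"
      using assms by (simp add: cong_add_lcancel cong_mult_lcancel)
    then show "x = y" using x y by (simp add: cong_int_iff cong_def)
  qed
  have "\<phi> ` {..<p} = {..<p}"
    using False by (intro endo_inj_surj[OF _ _ inj]) (auto simp: \<phi>_def nat_less_iff)
  then have "(\<Sum>u<p. G (int u)) = (\<Sum>u<p. G (int (\<phi> u)))"
    using sum.reindex[OF inj, of "G \<circ> int"] by simp
  also have "\<dots> = (\<Sum>u<p. G ((a + b * int u) mod int p))"
    using False by (simp add: \<phi>_def)
  finally show ?thesis by simp
qed simp

lemma sum_rotate_mod:
  fixes h :: "nat \<Rightarrow> 'a::comm_monoid_add"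
  assumes "p > 0"
  shows "(\<Sum>k<p. h ((k + p - 1) mod p)) = (\<Sum>k<p. h k)"
proof -
  have "(k + p - 1) mod p = nat ((-1 + 1 * int k) mod int p)" for k :: nat
  proof -
    have "int (k + p - 1) = (int k - 1) + int p" using assms by simp
    then have "int ((k + p - 1) mod p) = (int k - 1) mod int p"
      by (simp only: zmod_int mod_add_self2)
    then show ?thesis by simp
  qed
  then show ?thesis
    using sum_affine_mod_reindex[of 1 p "h \<circ> nat" "-1"] by simp
qed

lemma sum_delta_cong_mod:
  fixes z :: int
  assumes "p > 0"
  shows "(\<Sum>x<p. if [z = int x] (mod int p) then f x else 0) = f (nat (z mod int p))"
proof -
  have "[z = int x] (mod int p) \<longleftrightarrow> nat (z mod int p) = x" if "x < p" for x
    using that assms by (auto simp: cong_def)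
  then have "(\<Sum>x<p. if [z = int x] (mod int p) then f x else 0)
      = (\<Sum>x<p. if nat (z mod int p) = x then f x else 0)"
    by (intro sum.cong) auto
  also have "\<dots> = f (nat (z mod int p))"
    using assms by (simp add: nat_less_iff)
  finally show ?thesis .
qed

lemma cong_diff_eq_0_iff:
  assumes "k < p" "c < p"
  shows "[int k - int c = 0] (mod int p) \<longleftrightarrow> c = k"
proof -
  have "[int k - int c = 0] (mod int p) \<longleftrightarrow> [k = c] (mod p)"
    by (simp add: cong_iff_dvd_diff flip: cong_int_iff)
  also have "\<dots> \<longleftrightarrow> c = k" using assms by (auto simp: cong_def)
  finally show ?thesis .
qed

lemma cong_diff_eq_1_iff:
  assumes "k < p" "c < p"
  shows "[int k - int c = 1] (mod int p) \<longleftrightarrow> c = (k + p - 1) mod p"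
proof -
  have "int (k + p - 1) = (int k - 1) + int p" using assms by simp
  then have "int ((k + p - 1) mod p) = (int k - 1) mod int p"
    by (simp only: zmod_int mod_add_self2)
  then have "c = (k + p - 1) mod p \<longleftrightarrow> int c = (int k - 1) mod int p"
    by linarith
  also have "\<dots> \<longleftrightarrow> [int c = int k - 1] (mod int p)"
    using assms by (simp add: cong_def)
  also have "\<dots> \<longleftrightarrow> [int k - int c = 1] (mod int p)"
    by (simp add: cong_iff_dvd_diff dvd_diff_commute algebra_simps)
  finally show ?thesis by simp
qed

lemma fermat_theorem_int:
  assumes "prime p" and "0 < u" "u < p"
  shows "[int u ^ (p - 1) = 1] (mod int p)"
proof -
  have "[u ^ (p - 1) = 1] (mod p)"
    using assms by (intro fermat_theorem) (auto dest: dvd_imp_le)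
  then show ?thesis by (metis cong_int_iff of_nat_1 of_nat_power)
qed

lemma power_sum_mod_prime:
  assumes p: "prime p"
  shows "[(\<Sum>u<p. int u ^ e) = (if 0 < e \<and> (p - 1) dvd e then -1 else 0)] (mod int p)"
proof -
  have p1: "p > 1" using p prime_gt_1_nat by blast
  let ?S = "\<Sum>u<p. int u ^ e"
  consider "e = 0" | "0 < e" "(p - 1) dvd e" | "\<not> (p - 1) dvd e" by fastforce
  then show ?thesis
  proof cases
    case 1
    then show ?thesis by (simp add: cong_0_iff)
  next
    case 2
    have "[?S = (\<Sum>u<p. if u = 0 then 0 else 1)] (mod int p)"
    proof (rule cong_sum)
      fix u assume "u \<in> {..<p}"
      moreover obtain q where "e = (p - 1) * q" using 2 by blast
      ultimately show "[int u ^ e = (if u = 0 then 0 else 1)] (mod int p)"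
        using 2 fermat_theorem_int[OF p, of u]
        by (auto simp: power_mult power_0_left intro: cong_pow[of _ 1, simplified])
    qed
    also have "(\<Sum>u<p. if u = 0 then 0 else 1 :: int) = int p - 1"
      using p1 by (cases p) (simp_all only: sum.lessThan_Suc_shift, simp)
    also have "[int p - 1 = -1] (mod int p)" by (simp add: cong_iff_dvd_diff)
    finally show ?thesis using 2 by simp
  next
    case 3
    obtain g where "residue_primroot p g"
      using prime_primitive_root_exists[OF p1 p] by blast
    then have cop: "coprime (int g) (int p)" and "ord p g = p - 1"
      using p by (auto simp: residue_primroot_def totient_prime coprime_commute)
    then have "\<not> [g ^ e = 1] (mod p)" using 3 ord_divides by metis
    then have not_dvd: "\<not> int p dvd int g ^ e - 1"
      by (metis cong_iff_dvd_diff cong_int_iff of_nat_1 of_nat_power)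
    have "int g ^ e * ?S = (\<Sum>u<p. (int g * int u) ^ e)"
      by (simp add: sum_distrib_left power_mult_distrib)
    also have "[\<dots> = (\<Sum>u<p. ((int g * int u) mod int p) ^ e)] (mod int p)"
      by (intro cong_sum cong_pow) (simp add: cong_def)
    also have "(\<Sum>u<p. ((int g * int u) mod int p) ^ e) = ?S"
      using sum_affine_mod_reindex[OF cop, of "\<lambda>x. x ^ e" 0] by simp
    finally have "int p dvd (int g ^ e - 1) * ?S"
      by (simp add: cong_iff_dvd_diff algebra_simps)
    then have "int p dvd ?S"
      using not_dvd p by (simp add: prime_dvd_mult_iff)
    then show ?thesis using 3 by (simp add: cong_0_iff)
  qed
qed

lemma geometric_sum_mod_prime:
  fixes x :: int
  assumes p: "prime p"
  shows "[(\<Sum>m<p - 1. x ^ m) =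
    (if [x = 0] (mod int p) then 1 else 0) - (if [x = 1] (mod int p) then 1 else 0)] (mod int p)"
proof -
  have p2: "p \<ge> 2" using p prime_ge_2_nat by blast
  have not_01: "\<not> [0 = 1] (mod int p)" using p2 by (simp add: cong_0_1_int)
  consider "[x = 0] (mod int p)" | "[x = 1] (mod int p)"
    | "\<not> [x = 0] (mod int p)" "\<not> [x = 1] (mod int p)" by blast
  then show ?thesis
  proof cases
    case 1
    have "[(\<Sum>m<p - 1. x ^ m) = (\<Sum>m<p - 1. 0 ^ m)] (mod int p)"
      by (intro cong_sum cong_pow 1)
    also have "(\<Sum>m<p - 1. (0::int) ^ m) = 1"
      using p2 by (cases "p - 1") (simp_all only: sum.lessThan_Suc_shift, simp_all)
    finally show ?thesis using 1 not_01 by (auto dest: cong_sym cong_trans)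
  next
    case 2
    have "[(\<Sum>m<p - 1. x ^ m) = (\<Sum>m<p - 1. 1 ^ m)] (mod int p)"
      by (intro cong_sum cong_pow 2)
    also have "(\<Sum>m<p - 1. (1::int) ^ m) = int p - 1" using p2 by simp
    also have "[int p - 1 = -1] (mod int p)" by (simp add: cong_iff_dvd_diff)
    finally show ?thesis using 2 not_01 by (auto dest: cong_sym cong_trans)
  next
    case 3
    define r where "r = nat (x mod int p)"
    have "0 \<le> x mod int p" "x mod int p < int p" "x mod int p \<noteq> 0"
      using 3(1) p2 by (simp_all add: cong_def)
    then have r: "0 < r" "r < p" "[int r = x] (mod int p)"
      by (auto simp: r_def cong_def)
    have "[x ^ (p - 1) = 1] (mod int p)"
      using cong_pow[OF cong_sym[OF r(3)]] fermat_theorem_int[OF p r(1,2)] by (rule cong_trans)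
    then have "int p dvd (x - 1) * (\<Sum>m<p - 1. x ^ m)"
      by (simp add: cong_iff_dvd_diff power_diff_1_eq)
    moreover have "\<not> int p dvd x - 1" using 3(2) by (simp add: cong_iff_dvd_diff)
    ultimately have "int p dvd (\<Sum>m<p - 1. x ^ m)" using p by (simp add: prime_dvd_mult_iff)
    then show ?thesis using 3 by (simp add: cong_0_iff)
  qed
qed

lemma sum_power_diff_mult_inverse_power:
  fixes d :: int
  assumes p: "prime p" and n: "0 < n" "n < p"
  shows "[(\<Sum>u<p. (d - int u) ^ n * int u ^ (p - 2)) = int n * d ^ (n - 1)] (mod int p)"
proof -
  have p2: "p \<ge> 2" using p prime_ge_2_nat by blast
  define c where "c l = of_nat (n choose l) * (-1) ^ l * d ^ (n - l)" for l
  have exponent_cases: "0 < l + (p - 2) \<and> (p - 1) dvd l + (p - 2) \<longleftrightarrow> l = 1"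
    if "l \<le> n" for l
  proof (cases "l = 0")
    case True
    have "\<not> (p - 1) dvd (p - 2)" if "p > 2" using that by (intro nat_dvd_not_less) auto
    then show ?thesis using True p2 by (cases "p = 2") auto
  next
    case False
    then have "l + (p - 2) = (l - 1) + (p - 1)" using p2 by simp
    then have "(p - 1) dvd l + (p - 2) \<longleftrightarrow> (p - 1) dvd (l - 1)" by simp
    then show ?thesis using False that n by (cases "l = 1") (auto dest: dvd_imp_le)
  qed
  have "(\<Sum>u<p. (d - int u) ^ n * int u ^ (p - 2))
        = (\<Sum>u<p. \<Sum>l\<le>n. c l * int u ^ (l + (p - 2)))"
  proof (rule sum.cong[OF refl])
    fix u
    have "(d - int u) ^ n = (\<Sum>l\<le>n. of_nat (n choose l) * (- int u) ^ l * d ^ (n - l))"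
      using binomial_ring[of "- int u" d n] by simp
    also have "\<dots> = (\<Sum>l\<le>n. c l * int u ^ l)"
      unfolding c_def by (subst power_minus) (simp only: mult_ac)
    finally show "(d - int u) ^ n * int u ^ (p - 2) = (\<Sum>l\<le>n. c l * int u ^ (l + (p - 2)))"
      by (simp add: sum_distrib_right power_add mult.assoc)
  qed
  also have "\<dots> = (\<Sum>l\<le>n. c l * (\<Sum>u<p. int u ^ (l + (p - 2))))"
    unfolding sum_distrib_left by (rule sum.swap)
  also have "[\<dots> = (\<Sum>l\<le>n. c l * (if l = 1 then -1 else 0))] (mod int p)"
  proof (intro cong_sum cong_scalar_left)
    fix l assume "l \<in> {..n}"
    then have "0 < l + (p - 2) \<and> (p - 1) dvd l + (p - 2) \<longleftrightarrow> l = 1"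
      by (intro exponent_cases) simp
    with power_sum_mod_prime[OF p, of "l + (p - 2)"]
    show "[(\<Sum>u<p. int u ^ (l + (p - 2))) = (if l = 1 then -1 else 0)] (mod int p)"
      by (simp only:)
  qed
  also have "(\<Sum>l\<le>n. c l * (if l = 1 then -1 else 0)) = - c 1"
    using n by (simp add: if_distrib[of "(*) _"] sum.delta cong: if_cong)
  also have "- c 1 = int n * d ^ (n - 1)"
    by (simp add: c_def)
  finally show ?thesis .
qed

lemma convolution_power_inverse_power:
  fixes a b :: int
  assumes "prime p" "0 < n" "n < p"
  shows "[(\<Sum>c<p. (int c - a) ^ n * (b - int c) ^ (p - 2)) = int n * (b - a) ^ (n - 1)] (mod int p)"
proof -
  define G where "G w = ((b - a) - w) ^ n * w ^ (p - 2)" for w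
  have "(\<Sum>c<p. (int c - a) ^ n * (b - int c) ^ (p - 2)) = (\<Sum>c<p. G (b - int c))"
    by (simp add: G_def)
  also have "[\<dots> = (\<Sum>c<p. G ((b + (-1) * int c) mod int p))] (mod int p)"
    unfolding G_def by (intro cong_sum cong_mult cong_pow cong_diff cong_refl) (simp_all add: cong_def)
  also have "(\<Sum>c<p. G ((b + (-1) * int c) mod int p)) = (\<Sum>u<p. G (int u))"
    by (rule sum_affine_mod_reindex) simp
  also have "[\<dots> = int n * (b - a) ^ (n - 1)] (mod int p)"
    unfolding G_def by (rule sum_power_diff_mult_inverse_power) (use assms in auto)
  finally show ?thesis .
qed

section \<open>The augmentation kernel\<close>

lemma fpnorm_in_Quot: "p > 0 \<Longrightarrow> fpnorm p f \<in> Quot p"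
  by (simp add: fpnorm_def Quot_def)

lemma Quot_eq_fpnormI:
  assumes "f \<in> Quot p" and "\<And>k. k < p \<Longrightarrow> [g k = f k] (mod int p)"
  shows "f = fpnorm p g"
proof
  fix k
  show "f k = fpnorm p g k"
    using assms by (cases "k < p") (auto simp: Quot_def fpnorm_def cong_def)
qed

lemma fpnorm_in_aug_kernel_iff:
  assumes "p > 0"
  shows "fpnorm p g \<in> aug_kernel p \<longleftrightarrow> [(\<Sum>k<p. g k) = 0] (mod int p)"
proof -
  have "[(\<Sum>k<p. fpnorm p g k) = (\<Sum>k<p. g k)] (mod int p)"
    by (rule cong_sum) (simp add: fpnorm_def cong_def)
  then show ?thesis
    using fpnorm_in_Quot[OF assms] by (auto simp: aug_kernel_def cong_def)
qed

lemma partial_sum_diff_cong: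
  assumes f: "f \<in> aug_kernel p" and k: "k < p"
  shows "[(\<Sum>i\<le>k. f i) - (\<Sum>i\<le>(k + p - 1) mod p. f i) = f k] (mod int p)"
proof (cases "k = 0")
  case True
  have "{..(k + p - 1) mod p} = {..<p}" using True k by auto
  then have "[(\<Sum>i\<le>(k + p - 1) mod p. f i) = 0] (mod int p)"
    using f by (simp add: aug_kernel_def cong_def)
  then show ?thesis using True by (simp add: cong_iff_dvd_diff)
next
  case False
  then have "(k + p - 1) mod p = k - 1" using k by (simp add: mod_if)
  moreover have "{..k} = insert k {..k - 1}" using False by auto
  ultimately show ?thesis using False by simp
qed

lemma t_minus_1_ideal_eq_aug_kernel:
  assumes p0: "p > 0"
  shows "t_minus_1_ideal p = aug_kernel p"
proof
  show "t_minus_1_ideal p \<subseteq> aug_kernel p"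
  proof
    fix g assume "g \<in> t_minus_1_ideal p"
    then obtain h where g: "g = fpnorm p (\<lambda>k. h ((k + p - 1) mod p) - h k)"
      by (auto simp: t_minus_1_ideal_def)
    have "(\<Sum>k<p. h ((k + p - 1) mod p) - h k) = 0"
      unfolding sum_subtractf sum_rotate_mod[OF p0] by simp
    then show "g \<in> aug_kernel p"
      unfolding g fpnorm_in_aug_kernel_iff[OF p0] by simp
  qed
next
  show "aug_kernel p \<subseteq> t_minus_1_ideal p"
  proof
    fix f assume f: "f \<in> aug_kernel p"
    define F where "F k = (\<Sum>i\<le>k. f i)" for k
    define h where "h k = (if k < p then (- F k) mod int p else 0)" for k
    have "h \<in> Quot p" using p0 by (simp add: h_def Quot_def)
    moreover have "f = fpnorm p (\<lambda>k. h ((k + p - 1) mod p) - h k)"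
    proof (rule Quot_eq_fpnormI)
      show "f \<in> Quot p" using f by (simp add: aug_kernel_def)
      fix k assume k: "k < p"
      have "[h ((k + p - 1) mod p) - h k = - F ((k + p - 1) mod p) - - F k] (mod int p)"
        unfolding h_def using k p0 by (intro cong_diff) (simp_all add: cong_def)
      also have "- F ((k + p - 1) mod p) - - F k = F k - F ((k + p - 1) mod p)"
        by simp
      also have "[F k - F ((k + p - 1) mod p) = f k] (mod int p)"
        unfolding F_def by (rule partial_sum_diff_cong[OF f k])
      finally show "[h ((k + p - 1) mod p) - h k = f k] (mod int p)" .
    qed
    ultimately show "f \<in> t_minus_1_ideal p" by (auto simp: t_minus_1_ideal_def)
  qed
qed

section \<open>The submodule generated by ybar\<close>

lemma act_translation:
  assumes "p > 0" "k < p"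
  shows "act p c 1 v k = v (nat ((int k - int c) mod int p)) mod int p"
proof -
  have "[int c + int 1 * int x = int k] (mod int p) \<longleftrightarrow> [int k - int c = int x] (mod int p)"
    for x
    by (auto simp: cong_iff_dvd_diff dvd_diff_commute algebra_simps)
  then show ?thesis
    using assms by (simp add: act_def fpnorm_def sum_delta_cong_mod)
qed

lemma act_coefficient_sum:
  assumes "p > 0"
  shows "[(\<Sum>k<p. act p c m v k) = (\<Sum>x<p. v x)] (mod int p)"
proof -
  have "[(\<Sum>k<p. act p c m v k)
      = (\<Sum>k<p. \<Sum>x<p. if [int c + int m * int x = int k] (mod int p) then v x else 0)]
      (mod int p)"
    by (rule cong_sum) (simp add: act_def fpnorm_def cong_def)
  also have "(\<Sum>k<p. \<Sum>x<p. if [int c + int m * int x = int k] (mod int p) then v x else 0)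
      = (\<Sum>x<p. \<Sum>k<p. if [int c + int m * int x = int k] (mod int p) then v x else 0)"
    by (rule sum.swap)
  also have "\<dots> = (\<Sum>x<p. v x)"
    using assms by (simp add: sum_delta_cong_mod)
  finally show ?thesis .
qed

lemma inverse_power_cong:
  assumes p: "prime p" and i: "0 < i" "i < p"
  shows "[int i * int i ^ (p - 2) = 1] (mod int p)"
proof -
  have "p - 1 = Suc (p - 2)" using prime_ge_2_nat[OF p] by simp
  then show ?thesis using fermat_theorem_int[OF assms] by simp
qed

lemma modinv_eq_power:
  assumes p: "prime p" and i: "0 < i" "i < p"
  shows "modinv p i = int i ^ (p - 2) mod int p"
  unfolding modinv_def
proof (rule the_equality)
  have inv: "[int i * (int i ^ (p - 2) mod int p) = 1] (mod int p)"
    using inverse_power_cong[OF assms] by (simp add: cong_def mod_mult_right_eq)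
  then show "0 \<le> int i ^ (p - 2) mod int p \<and> int i ^ (p - 2) mod int p < int p \<and>
        [int i * (int i ^ (p - 2) mod int p) = 1] (mod int p)"
    using i by simp
  fix j assume j: "0 \<le> j \<and> j < int p \<and> [int i * j = 1] (mod int p)"
  have "[j = j * (int i * (int i ^ (p - 2) mod int p))] (mod int p)"
    using cong_scalar_left[OF inv, of j] by (simp add: cong_sym)
  also have "j * (int i * (int i ^ (p - 2) mod int p)) = (int i * j) * (int i ^ (p - 2) mod int p)"
    by (simp add: ac_simps)
  also have "[\<dots> = 1 * (int i ^ (p - 2) mod int p)] (mod int p)"
    using j by (intro cong_scalar_right) simp
  finally show "j = int i ^ (p - 2) mod int p"
    using j i by (intro cong_less_imp_eq_int) auto
qed

lemma mult_modinv_cong: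
  assumes "prime p" "0 < i" "i < p"
  shows "[int i * modinv p i = 1] (mod int p)"
  using inverse_power_cong[OF assms]
  by (simp add: modinv_eq_power[OF assms] cong_def mod_mult_right_eq)

text \<open>The hypothesis 2 < p is needed at x = 0, where ybar has coefficient 0 but 0 ^ 0 = 1.\<close>
lemma ybar_cong:
  assumes "prime p" "2 < p" "x < p"
  shows "[ybar p x = int x ^ (p - 2)] (mod int p)"
  using assms modinv_eq_power[of p x]
  by (cases "x = 0") (simp_all add: ybar_def fpnorm_def cong_def power_0_left)

lemma act_translation_ybar_cong:
  assumes p: "prime p" "2 < p" and k: "k < p"
  shows "[act p c 1 (ybar p) k = (int k - int c) ^ (p - 2)] (mod int p)"
proof -
  let ?x = "nat ((int k - int c) mod int p)"
  have x: "?x < p" and int_x: "int ?x = (int k - int c) mod int p"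
    using p by (simp_all add: nat_less_iff)
  have "act p c 1 (ybar p) k = ybar p ?x mod int p"
    using p k by (intro act_translation) auto
  also have "[\<dots> = int ?x ^ (p - 2)] (mod int p)"
    using ybar_cong[OF p x] by (simp add: cong_def)
  also have "[int ?x ^ (p - 2) = (int k - int c) ^ (p - 2)] (mod int p)"
    unfolding int_x by (intro cong_pow) (simp add: cong_def)
  finally show ?thesis .
qed

lemma gen_submodule_subset_aug_kernel:
  assumes p: "prime p" "2 < p"
  shows "gen_submodule p (ybar p) \<subseteq> aug_kernel p"
proof
  fix g assume "g \<in> gen_submodule p (ybar p)"
  then obtain a
    where g: "g = fpnorm p (\<lambda>k. \<Sum>c<p. \<Sum>m\<in>{1..<p}. a c m * act p c m (ybar p) k)"
    by (auto simp: gen_submodule_def)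
  have p0: "p > 0" using p by simp
  have "\<not> (p - 1) dvd (p - 2)"
    using p by (intro nat_dvd_not_less) auto
  then have "[(\<Sum>x<p. int x ^ (p - 2)) = 0] (mod int p)"
    using power_sum_mod_prime[OF p(1), of "p - 2"] by simp
  then have ybar_sum: "[(\<Sum>x<p. ybar p x) = 0] (mod int p)"
    using ybar_cong[OF p] by (metis (no_types, lifting) cong_sum cong_trans lessThan_iff)
  have "(\<Sum>k<p. \<Sum>c<p. \<Sum>m\<in>{1..<p}. a c m * act p c m (ybar p) k)
      = (\<Sum>c<p. \<Sum>k<p. \<Sum>m\<in>{1..<p}. a c m * act p c m (ybar p) k)"
    by (rule sum.swap)
  also have "\<dots> = (\<Sum>c<p. \<Sum>m\<in>{1..<p}. a c m * (\<Sum>k<p. act p c m (ybar p) k))"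
    by (simp only: sum_distrib_left sum.swap[where A = "{..<p}" and B = "{1..<p}"])
  also have "[\<dots> = (\<Sum>c<p. \<Sum>m\<in>{1..<p}. a c m * 0)] (mod int p)"
    by (intro cong_sum cong_scalar_left cong_trans[OF act_coefficient_sum[OF p0] ybar_sum])
  finally show "g \<in> aug_kernel p"
    unfolding g fpnorm_in_aug_kernel_iff[OF p0] by simp
qed

lemma translates_in_gen_submodule:
  assumes "1 < p"
  shows "fpnorm p (\<lambda>k. \<Sum>c<p. A c * act p c 1 v k) \<in> gen_submodule p v"
proof -
  define a where "a c m = (if m = 1 then A c else 0)" for c m :: nat
  have "(\<Sum>m\<in>{1..<p}. a c m * act p c m v k) = A c * act p c 1 v k" for c k
    using assms by (simp add: a_def if_distrib[of "\<lambda>x. x * _"] sum.delta cong: if_cong)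
  then have "fpnorm p (\<lambda>k. \<Sum>c<p. A c * act p c 1 v k)
      = fpnorm p (\<lambda>k. \<Sum>c<p. \<Sum>m\<in>{1..<p}. a c m * act p c m v k)"
    by simp
  then show ?thesis unfolding gen_submodule_def by blast
qed

definition log_series :: "nat \<Rightarrow> int \<Rightarrow> int" where
  "log_series p x = (\<Sum>m<p - 1. modinv p (m + 1) * x ^ (m + 1))"

lemma convolution_log_series_inverse_power:
  fixes a b :: int
  assumes p: "prime p"
  shows "[(\<Sum>c<p. log_series p (int c - a) * (b - int c) ^ (p - 2))
    = (\<Sum>m<p - 1. (b - a) ^ m)] (mod int p)"
proof -
  have "(\<Sum>c<p. log_series p (int c - a) * (b - int c) ^ (p - 2))
      = (\<Sum>m<p - 1. modinv p (m + 1) * (\<Sum>c<p. (int c - a) ^ (m + 1) * (b - int c) ^ (p - 2)))"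
    unfolding log_series_def sum_distrib_right sum_distrib_left mult.assoc by (rule sum.swap)
  also have "[\<dots> = (\<Sum>m<p - 1. modinv p (m + 1) * (int (m + 1) * (b - a) ^ m))] (mod int p)"
  proof (intro cong_sum cong_scalar_left)
    fix m assume "m \<in> {..<p - 1}"
    then show "[(\<Sum>c<p. (int c - a) ^ (m + 1) * (b - int c) ^ (p - 2))
        = int (m + 1) * (b - a) ^ m] (mod int p)"
      using convolution_power_inverse_power[OF p, of "m + 1"] by simp
  qed
  also have "[(\<Sum>m<p - 1. modinv p (m + 1) * (int (m + 1) * (b - a) ^ m))
      = (\<Sum>m<p - 1. 1 * (b - a) ^ m)] (mod int p)"
  proof (unfold mult.assoc[symmetric], intro cong_sum cong_scalar_right)
    fix m assume "m \<in> {..<p - 1}"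
    then show "[modinv p (m + 1) * int (m + 1) = 1] (mod int p)"
      using mult_modinv_cong[OF p, of "m + 1"] by (simp add: mult.commute)
  qed
  finally show ?thesis by simp
qed

lemma log_series_translates_ybar_cong:
  assumes p: "prime p" "2 < p" and k: "k < p" and c': "c' < p"
  shows "[(\<Sum>c<p. log_series p (int c - int c') * act p c 1 (ybar p) k)
      = (if c' = k then 1 else 0) - (if c' = (k + p - 1) mod p then 1 else 0)] (mod int p)"
proof -
  have "[(\<Sum>c<p. log_series p (int c - int c') * act p c 1 (ybar p) k)
      = (\<Sum>c<p. log_series p (int c - int c') * (int k - int c) ^ (p - 2))] (mod int p)"
    using act_translation_ybar_cong[OF p k] by (intro cong_sum cong_scalar_left)
  also have "[(\<Sum>c<p. log_series p (int c - int c') * (int k - int c) ^ (p - 2))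
      = (if [int k - int c' = 0] (mod int p) then 1 else 0)
        - (if [int k - int c' = 1] (mod int p) then 1 else 0)] (mod int p)"
    using convolution_log_series_inverse_power[OF p(1)] geometric_sum_mod_prime[OF p(1)]
    by (rule cong_trans)
  finally show ?thesis
    by (simp only: cong_diff_eq_0_iff[OF k c'] cong_diff_eq_1_iff[OF k c'])
qed

lemma aug_kernel_subset_gen_submodule:
  assumes p: "prime p" "2 < p"
  shows "aug_kernel p \<subseteq> gen_submodule p (ybar p)"
proof
  fix f assume f: "f \<in> aug_kernel p"
  define F where "F k = (\<Sum>i\<le>k. f i)" for k
  define A where "A c = (\<Sum>c'<p. F c' * log_series p (int c - int c'))" for c
  have "[(\<Sum>c<p. A c * act p c 1 (ybar p) k) = f k] (mod int p)" if k: "k < p" for k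
  proof -
    let ?prev = "(k + p - 1) mod p"
    have "(\<Sum>c<p. A c * act p c 1 (ybar p) k)
        = (\<Sum>c'<p. F c' * (\<Sum>c<p. log_series p (int c - int c') * act p c 1 (ybar p) k))"
      unfolding A_def sum_distrib_right sum_distrib_left mult.assoc by (rule sum.swap)
    also have "[\<dots> = (\<Sum>c'<p. F c' * ((if c' = k then 1 else 0) - (if c' = ?prev then 1 else 0)))]
        (mod int p)"
      using log_series_translates_ybar_cong[OF p k] by (intro cong_sum cong_scalar_left) simp
    also have "(\<Sum>c'<p. F c' * ((if c' = k then 1 else 0) - (if c' = ?prev then 1 else 0)))
        = F k - F ?prev"
      using k
      by (simp add: right_diff_distrib sum_subtractf if_distrib[of "(*) _"] sum.delta cong: if_cong)
    also have "[F k - F ?prev = f k] (mod int p)"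
      unfolding F_def by (rule partial_sum_diff_cong[OF f k])
    finally show ?thesis .
  qed
  then have "f = fpnorm p (\<lambda>k. \<Sum>c<p. A c * act p c 1 (ybar p) k)"
    using f by (intro Quot_eq_fpnormI) (auto simp: aug_kernel_def)
  then show "f \<in> gen_submodule p (ybar p)"
    using translates_in_gen_submodule p by simp
qed

theorem mainTheorem19:
  fixes p :: nat
  assumes "prime p" and "odd p"
  shows "gen_submodule p (ybar p) = t_minus_1_ideal p \<and> gen_submodule p (ybar p) = aug_kernel p"
proof -
  have "p \<noteq> 2" using assms(2) by auto
  then have p: "2 < p" using prime_ge_2_nat[OF assms(1)] by simp
  have "gen_submodule p (ybar p) = aug_kernel p"
    using gen_submodule_subset_aug_kernel[OF assms(1) p] aug_kernel_subset_gen_submodule[OF assms(1) p]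
    by blast
  moreover have "t_minus_1_ideal p = aug_kernel p"
    using p by (intro t_minus_1_ideal_eq_aug_kernel) simp
  ultimately show ?thesis by simp
qed

end
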